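(* Let $\Omega\subset\{1,\dots,|\mathcal{Y}|\}$ with $|\Omega|=|\mathcal{X}|$ be such that $M_\Omega$ is invertible. Then $\mathbf{1}^T\left(M_{\Omega}^{-1}MP_Y\right)=1$. Furthermore, for every $J_u\in\mathbb{R}^{|\mathcal{X}|}$ with $\sum_x J_u(x)=0$, $\mathbf{1}^T\left(M_{\Omega}^{-1}M\begin{bmatrix}P_{X|Y_1}^{-1}J_u\\0\end{bmatrix}\right)=0$.
   Context: Setting: $X,Y$ on finite alphabets with $|\mathcal{X}|<|\mathcal{Y}|$, joint pmf $P_{XY}$ with marginal vectors $P_X,P_Y$ having positive entries. $P_{X|Y}\in\mathbb{R}^{|\mathcal{X}|\times|\mathcal{Y}|}$ (columns are the conditional distributions $P_{X|Y=y}$) has full row rank, with $P_{X|Y}=[P_{X|Y_1},P_{X|Y_2}]$ where $P_{X|Y_1}$ (the first $|\mathcal{X}|$ columns) is invertible. With an SVD $P_{X|Y}=U\Sigma V^T$, $V=[v_1,\dots,v_{|\mathcal{Y}|}]$, set $M=[v_1,\dots,v_{|\mathcal{X}|}]^T$. $M_\Omega\in\mathbb{R}^{|\mathcal{X}|\times|\mathcal{X}|}$ is the submatrix of $M$ formed by the columns indexed by $\Omega$ (in increasing order). The zero block has size $|\mathcal{Y}|-|\mathcal{X}|$; $\mathbf{1}$ is the all-ones vector. *)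

theory Defs
  imports "Jordan_Normal_Form.DL_Rank_Submatrix"
begin

text \<open>The (two-sided) inverse of a square matrix, chosen by Hilbert choice;
  it is only used for matrices assumed invertible.\<close>
definition mat_inv :: "real mat \<Rightarrow> real mat" where
  "mat_inv A = (SOME B. inverts_mat A B \<and> inverts_mat B A)"

definition ones_vec :: "nat \<Rightarrow> real vec" where
  "ones_vec n = vec n (\<lambda>_. 1)"

end

theory Submission
  imports Defs
begin

text \<open>Write \<open>P = P\<^sub>X\<^sub>|\<^sub>Y\<close>. Since the singular values sit in the first \<open>nx\<close> columns of
  \<open>\<Sigma>\<close>, the SVD factors as \<open>P = Q M\<close> with \<open>Q = U \<Sigma>\<^sub>1\<close> square. Restricting to the columns \<open>\<Omega>\<close> gives \<open>P\<^sub>\<Omega> = Q M\<^sub>\<Omega>\<close>, hence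
  \<open>P = P\<^sub>\<Omega> M\<^sub>\<Omega>\<^sup>-\<^sup>1 M\<close>. The columns of \<open>P\<close>, and so those of \<open>P\<^sub>\<Omega>\<close>, are probability vectors,
  i.e. \<open>\<one>\<^sup>T P\<^sub>\<Omega> = \<one>\<^sup>T\<close>, and therefore \<open>\<one>\<^sup>T M\<^sub>\<Omega>\<^sup>-\<^sup>1 M x = \<one>\<^sup>T P\<^sub>\<Omega> M\<^sub>\<Omega>\<^sup>-\<^sup>1 M x = \<one>\<^sup>T P x\<close>
  for every \<open>x\<close>. For \<open>x = P\<^sub>Y\<close> this is \<open>\<one>\<^sup>T P\<^sub>X = 1\<close>; for \<open>x = [P\<^sub>1\<^sup>-\<^sup>1 J; 0]\<close> it is
  \<open>\<one>\<^sup>T J = 0\<close>.\<close>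

lemma
  assumes "invertible_mat A" and A: "A \<in> carrier_mat n n"
  shows mat_inv_carrier: "mat_inv A \<in> carrier_mat n n"
    and mult_mat_inv: "A * mat_inv A = 1\<^sub>m n"
proof -
  have "inverts_mat A (mat_inv A) \<and> inverts_mat (mat_inv A) A"
    using assms(1) unfolding invertible_mat_def mat_inv_def by (metis (mono_tags, lifting) someI)
  then have AB: "A * mat_inv A = 1\<^sub>m n" and BA: "mat_inv A * A = 1\<^sub>m (dim_row (mat_inv A))"
    using A unfolding inverts_mat_def by auto
  have "dim_col (mat_inv A) = n" using arg_cong[OF AB, of dim_col] by simp
  moreover have "dim_row (mat_inv A) = n" using arg_cong[OF BA, of dim_col] A by simp
  ultimately show "mat_inv A \<in> carrier_mat n n" by auto
  show "A * mat_inv A = 1\<^sub>m n" by (fact AB)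
qed

lemma card_Collect_less_mem:
  assumes "J \<subseteq> {..<m}"
  shows "card {j. j < m \<and> j \<in> J} = card J"
proof -
  have "{j. j < m \<and> j \<in> J} = J" using assms by auto
  then show ?thesis by simp
qed

lemma submatrix_cols_carrier:
  "A \<in> carrier_mat n m \<Longrightarrow> J \<subseteq> {..<m} \<Longrightarrow> submatrix A UNIV J \<in> carrier_mat n (card J)"
  by (intro carrier_matI) (auto simp: dim_submatrix card_Collect_less_mem)

lemma pick_less_bound:
  "J \<subseteq> {..<m} \<Longrightarrow> j < card J \<Longrightarrow> pick J j < m"
  using pick_le[of j m J] card_Collect_less_mem[of J m] by simp

lemma pick_lessThan:
  assumes "j < k"
  shows "pick {..<k} j = j"
proof -
  have "{a \<in> {..<k}. a < j} = {..<j}" using assms by auto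
  then show ?thesis using pick_card_in_set[of j "{..<k}"] assms by simp
qed

lemma submatrix_cols_index:
  "A \<in> carrier_mat n m \<Longrightarrow> J \<subseteq> {..<m} \<Longrightarrow> i < n \<Longrightarrow> j < card J \<Longrightarrow>
   submatrix A UNIV J $$ (i, j) = A $$ (i, pick J j)"
  by (simp add: submatrix_index card_Collect_less_mem pick_UNIV)

lemma submatrix_cols_mult:
  assumes A: "A \<in> carrier_mat n k" and B: "B \<in> carrier_mat k m" and J: "J \<subseteq> {..<m}"
  shows "submatrix (A * B) UNIV J = A * submatrix B UNIV J"
proof -
  have BJ: "submatrix B UNIV J \<in> carrier_mat k (card J)"
    using B J by (rule submatrix_cols_carrier)
  have AB: "A * B \<in> carrier_mat n m" using A B by simp
  show ?thesis
  proof (rule eq_matI)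
    fix i j assume "i < dim_row (A * submatrix B UNIV J)" "j < dim_col (A * submatrix B UNIV J)"
    then have i: "i < n" and j: "j < card J" using A BJ by auto
    have "col (submatrix B UNIV J) j = col B (pick J j)"
      using B BJ J j pick_less_bound[OF J j] by (intro eq_vecI) (auto simp: submatrix_cols_index)
    then show "submatrix (A * B) UNIV J $$ (i, j) = (A * submatrix B UNIV J) $$ (i, j)"
      using A B BJ i j pick_less_bound[OF J j] by (simp add: submatrix_cols_index[OF AB J])
  qed (use A BJ submatrix_cols_carrier[OF AB J] in auto)
qed

lemma factor_through_col_submatrix:
  assumes A: "A = Q * M" and Q: "Q \<in> carrier_mat n n" and M: "M \<in> carrier_mat n m"
    and J: "J \<subseteq> {..<m}" "card J = n" and inv: "invertible_mat (submatrix M UNIV J)"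
  shows "submatrix A UNIV J * mat_inv (submatrix M UNIV J) * M = A"
proof -
  have MJ: "submatrix M UNIV J \<in> carrier_mat n n"
    using submatrix_cols_carrier[OF M J(1)] J(2) by simp
  have "submatrix A UNIV J * mat_inv (submatrix M UNIV J)
      = Q * (submatrix M UNIV J * mat_inv (submatrix M UNIV J))"
    using submatrix_cols_mult[OF Q M J(1)] A assoc_mult_mat[OF Q MJ mat_inv_carrier[OF inv MJ]]
    by simp
  also have "\<dots> = Q" using mult_mat_inv[OF inv MJ] Q by simp
  finally show ?thesis using A by simp
qed

lemma ones_vec_scalar_prod: "x \<in> carrier_vec n \<Longrightarrow> ones_vec n \<bullet> x = (\<Sum>i<n. x $ i)"
  by (simp add: ones_vec_def scalar_prod_def lessThan_atLeast0)

lemma ones_vec_scalar_mult_mat_vec: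
  assumes A: "A \<in> carrier_mat n m" and col_sums: "\<forall>j<m. (\<Sum>i<n. A $$ (i, j)) = 1"
    and x: "x \<in> carrier_vec m"
  shows "ones_vec n \<bullet> (A *\<^sub>v x) = ones_vec m \<bullet> x"
proof -
  have "A *\<^sub>v x \<in> carrier_vec n" using A x by simp
  then have "ones_vec n \<bullet> (A *\<^sub>v x) = (\<Sum>i<n. \<Sum>j<m. A $$ (i, j) * x $ j)"
    unfolding ones_vec_scalar_prod[OF \<open>A *\<^sub>v x \<in> carrier_vec n\<close>]
    using A x by (simp add: scalar_prod_def lessThan_atLeast0)
  also have "\<dots> = (\<Sum>j<m. (\<Sum>i<n. A $$ (i, j)) * x $ j)"
    by (subst sum.swap) (simp add: sum_distrib_right)
  also have "\<dots> = (\<Sum>j<m. x $ j)" using col_sums by simp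
  finally show ?thesis using x by (simp add: ones_vec_scalar_prod)
qed

lemma submatrix_cols_col_sums:
  assumes A: "A \<in> carrier_mat n m" and J: "J \<subseteq> {..<m}"
    and col_sums: "\<forall>j<m. (\<Sum>i<n. A $$ (i, j)) = 1"
  shows "\<forall>j<card J. (\<Sum>i<n. submatrix A UNIV J $$ (i, j)) = 1"
  using col_sums pick_less_bound[OF J] by (simp add: submatrix_cols_index[OF A J])

lemma ones_mat_inv_col_submatrix:
  assumes A: "A = Q * M" and Q: "Q \<in> carrier_mat n n" and M: "M \<in> carrier_mat n m"
    and J: "J \<subseteq> {..<m}" "card J = n" and inv: "invertible_mat (submatrix M UNIV J)"
    and col_sums: "\<forall>j<m. (\<Sum>i<n. A $$ (i, j)) = 1" and x: "x \<in> carrier_vec m"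
  shows "ones_vec n \<bullet> (mat_inv (submatrix M UNIV J) *\<^sub>v (M *\<^sub>v x)) = ones_vec n \<bullet> (A *\<^sub>v x)"
proof -
  have A_carrier: "A \<in> carrier_mat n m" using A Q M by simp
  have AJ: "submatrix A UNIV J \<in> carrier_mat n n" and MJ: "submatrix M UNIV J \<in> carrier_mat n n"
    using submatrix_cols_carrier[OF A_carrier J(1)] submatrix_cols_carrier[OF M J(1)] J(2) by simp_all
  have MJ_inv: "mat_inv (submatrix M UNIV J) \<in> carrier_mat n n"
    using mat_inv_carrier[OF inv MJ] .
  have "ones_vec n \<bullet> (mat_inv (submatrix M UNIV J) *\<^sub>v (M *\<^sub>v x))
      = ones_vec n \<bullet> (submatrix A UNIV J *\<^sub>v (mat_inv (submatrix M UNIV J) *\<^sub>v (M *\<^sub>v x)))"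
    using ones_vec_scalar_mult_mat_vec[OF AJ] submatrix_cols_col_sums[OF A_carrier J(1) col_sums]
      MJ_inv M x J(2) by simp
  also have "\<dots> = ones_vec n \<bullet> ((submatrix A UNIV J * mat_inv (submatrix M UNIV J) * M) *\<^sub>v x)"
    by (simp only: assoc_mult_mat_vec[OF mult_carrier_mat[OF AJ MJ_inv] M x]
        assoc_mult_mat_vec[OF AJ MJ_inv mult_mat_vec_carrier[OF M x]])
  also have "\<dots> = ones_vec n \<bullet> (A *\<^sub>v x)"
    using factor_through_col_submatrix[OF A Q M J inv] by simp
  finally show ?thesis .
qed

lemma mult_mat_zero_cols:
  assumes S: "S \<in> carrier_mat n m" and W: "W \<in> carrier_mat m p" and "k \<le> m"
    and zero: "\<forall>i<n. \<forall>j<m. k \<le> j \<longrightarrow> S $$ (i, j) = 0"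
  shows "S * W = mat n k (\<lambda>(i, j). S $$ (i, j)) * mat k p (\<lambda>(i, j). W $$ (i, j))"
proof (rule eq_matI)
  fix i l assume "i < dim_row (mat n k (\<lambda>(i, j). S $$ (i, j)) * mat k p (\<lambda>(i, j). W $$ (i, j)))"
    and "l < dim_col (mat n k (\<lambda>(i, j). S $$ (i, j)) * mat k p (\<lambda>(i, j). W $$ (i, j)))"
  then have i: "i < n" and l: "l < p" by simp_all
  have "(S * W) $$ (i, l) = (\<Sum>j<m. S $$ (i, j) * W $$ (j, l))"
    using S W i l by (simp add: scalar_prod_def lessThan_atLeast0)
  also have "\<dots> = (\<Sum>j<k. S $$ (i, j) * W $$ (j, l))"
    using zero i \<open>k \<le> m\<close> by (intro sum.mono_neutral_right) auto
  also have "\<dots> = (mat n k (\<lambda>(i, j). S $$ (i, j)) * mat k p (\<lambda>(i, j). W $$ (i, j))) $$ (i, l)"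
    using i l by (simp add: scalar_prod_def lessThan_atLeast0)
  finally show "(S * W) $$ (i, l) = \<dots>" .
qed (use S W in auto)

lemma svd_factor_through_right_singular_vectors:
  assumes U: "U \<in> carrier_mat r n" and S: "S \<in> carrier_mat n m" and V: "V \<in> carrier_mat m m"
    and "k \<le> m" and zero: "\<forall>i<n. \<forall>j<m. k \<le> j \<longrightarrow> S $$ (i, j) = 0"
  shows "U * S * transpose_mat V
    = (U * mat n k (\<lambda>(i, j). S $$ (i, j))) * mat k m (\<lambda>(i, j). V $$ (j, i))"
proof -
  have VT: "transpose_mat V \<in> carrier_mat m m" using V by simp
  have "mat k m (\<lambda>(i, j). transpose_mat V $$ (i, j)) = mat k m (\<lambda>(i, j). V $$ (j, i))"
    using V \<open>k \<le> m\<close> by (intro cong_mat) auto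
  then have "S * transpose_mat V = mat n k (\<lambda>(i, j). S $$ (i, j)) * mat k m (\<lambda>(i, j). V $$ (j, i))"
    using mult_mat_zero_cols[OF S VT \<open>k \<le> m\<close> zero] by simp
  then show ?thesis
    using assoc_mult_mat[OF U S VT] assoc_mult_mat[OF U, of _ k _ m] by simp
qed

lemma conditional_col_sums:
  fixes P :: "real mat"
  assumes PY: "PY = vec m (\<lambda>j. \<Sum>i<n. P $$ (i, j))" and pos: "\<forall>j<m. 0 < PY $ j"
  shows "\<forall>j<m. (\<Sum>i<n. mat n m (\<lambda>(i, j). P $$ (i, j) / PY $ j) $$ (i, j)) = 1"
proof (intro allI impI)
  fix j assume "j < m"
  then have "PY $ j = (\<Sum>i<n. P $$ (i, j))" and "0 < PY $ j" using PY pos by simp_all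
  moreover have "(\<Sum>i<n. mat n m (\<lambda>(i, j). P $$ (i, j) / PY $ j) $$ (i, j))
      = (\<Sum>i<n. P $$ (i, j)) / PY $ j"
    using \<open>j < m\<close> by (simp add: sum_divide_distrib)
  ultimately show "(\<Sum>i<n. mat n m (\<lambda>(i, j). P $$ (i, j) / PY $ j) $$ (i, j)) = 1" by simp
qed

lemma ones_vec_scalar_marginal:
  assumes "PY = vec m (\<lambda>j. \<Sum>i<n. P $$ (i, j))" and "(\<Sum>i<n. \<Sum>j<m. P $$ (i, j)) = 1"
  shows "ones_vec m \<bullet> PY = 1"
proof -
  have "(\<Sum>j<m. \<Sum>i<n. P $$ (i, j)) = (\<Sum>i<n. \<Sum>j<m. P $$ (i, j))" by (rule sum.swap)
  then show ?thesis using assms by (simp add: ones_vec_scalar_prod)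
qed

lemma mult_mat_vec_append_zero:
  assumes A: "A \<in> carrier_mat n m" and "k \<le> m" and w: "w \<in> carrier_vec k"
  shows "A *\<^sub>v (w @\<^sub>v 0\<^sub>v (m - k)) = submatrix A UNIV {..<k} *\<^sub>v w"
proof -
  have Ak: "submatrix A UNIV {..<k} \<in> carrier_mat n k"
    using submatrix_cols_carrier[OF A, of "{..<k}"] \<open>k \<le> m\<close> by auto
  show ?thesis
  proof (rule eq_vecI)
    fix i assume "i < dim_vec (submatrix A UNIV {..<k} *\<^sub>v w)"
    then have i: "i < n" using Ak by simp
    have "(A *\<^sub>v (w @\<^sub>v 0\<^sub>v (m - k))) $ i = (\<Sum>j<m. A $$ (i, j) * (w @\<^sub>v 0\<^sub>v (m - k)) $ j)"
      using A w i \<open>k \<le> m\<close> by (simp add: scalar_prod_def lessThan_atLeast0)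
    also have "\<dots> = (\<Sum>j<k. A $$ (i, j) * w $ j)"
      using w \<open>k \<le> m\<close> by (intro sum.mono_neutral_cong_right) auto
    also have "\<dots> = (submatrix A UNIV {..<k} *\<^sub>v w) $ i"
    proof -
      have "\<forall>j<k. submatrix A UNIV {..<k} $$ (i, j) = A $$ (i, j)"
        using submatrix_cols_index[OF A] pick_lessThan i \<open>k \<le> m\<close> by auto
      then show ?thesis using Ak w i by (simp add: scalar_prod_def lessThan_atLeast0)
    qed
    finally show "(A *\<^sub>v (w @\<^sub>v 0\<^sub>v (m - k))) $ i = (submatrix A UNIV {..<k} *\<^sub>v w) $ i" .
  qed (use A Ak in simp)
qed

lemma mult_mat_vec_leading_block_inv:
  assumes A: "A \<in> carrier_mat n m" and "n \<le> m"
    and inv: "invertible_mat (submatrix A UNIV {..<n})" and J: "J \<in> carrier_vec n"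
  shows "A *\<^sub>v (mat_inv (submatrix A UNIV {..<n}) *\<^sub>v J @\<^sub>v 0\<^sub>v (m - n)) = J"
proof -
  have A\<^sub>1: "submatrix A UNIV {..<n} \<in> carrier_mat n n"
    using submatrix_cols_carrier[OF A, of "{..<n}"] \<open>n \<le> m\<close> by simp
  have A\<^sub>1_inv: "mat_inv (submatrix A UNIV {..<n}) \<in> carrier_mat n n"
    using mat_inv_carrier[OF inv A\<^sub>1] .
  then show ?thesis
    using mult_mat_vec_append_zero[OF A \<open>n \<le> m\<close>] mult_mat_inv[OF inv A\<^sub>1] A\<^sub>1 J
    by (simp add: assoc_mult_mat_vec[OF A\<^sub>1 A\<^sub>1_inv J, symmetric])
qed

theorem proposition4:
  fixes nx ny :: nat
    and PXY PXgY U S V M :: "real mat"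
    and PX PY :: "real vec"
    and \<Omega> :: "nat set"
  assumes alph: "0 < nx" "nx < ny"
    and PXY_carrier: "PXY \<in> carrier_mat nx ny"
    and PXY_nonneg: "\<forall>i<nx. \<forall>j<ny. 0 \<le> PXY $$ (i, j)"
    and PXY_sum: "(\<Sum>i<nx. \<Sum>j<ny. PXY $$ (i, j)) = 1"
    and PX_def: "PX = vec nx (\<lambda>i. \<Sum>j<ny. PXY $$ (i, j))"
    and PY_def: "PY = vec ny (\<lambda>j. \<Sum>i<nx. PXY $$ (i, j))"
    and PX_pos: "\<forall>i<nx. 0 < PX $ i"
    and PY_pos: "\<forall>j<ny. 0 < PY $ j"
    and PXgY_def: "PXgY = mat nx ny (\<lambda>(i, j). PXY $$ (i, j) / PY $ j)"
    and full_rank: "vec_space.rank nx PXgY = nx"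
    and P1_inv: "invertible_mat (submatrix PXgY UNIV {..<nx})"
    and U_carrier: "U \<in> carrier_mat nx nx"
    and S_carrier: "S \<in> carrier_mat nx ny"
    and V_carrier: "V \<in> carrier_mat ny ny"
    and U_orth: "transpose_mat U * U = 1\<^sub>m nx"
    and V_orth: "transpose_mat V * V = 1\<^sub>m ny"
    and S_diag: "\<forall>i<nx. \<forall>j<ny. i \<noteq> j \<longrightarrow> S $$ (i, j) = 0"
    and S_nonneg: "\<forall>i<nx. 0 \<le> S $$ (i, i)"
    and S_sorted: "\<forall>i<nx. \<forall>k<nx. i \<le> k \<longrightarrow> S $$ (k, k) \<le> S $$ (i, i)"
    and svd: "PXgY = U * S * transpose_mat V"
    and M_def: "M = mat nx ny (\<lambda>(i, j). V $$ (j, i))"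
    and Omega_sub: "\<Omega> \<subseteq> {..<ny}"
    and Omega_card: "card \<Omega> = nx"
    and MOmega_inv: "invertible_mat (submatrix M UNIV \<Omega>)"
  shows "ones_vec nx \<bullet> (mat_inv (submatrix M UNIV \<Omega>) *\<^sub>v (M *\<^sub>v PY)) = 1
    \<and> (\<forall>J \<in> carrier_vec nx. (\<Sum>i<nx. J $ i) = 0 \<longrightarrow>
         ones_vec nx \<bullet> (mat_inv (submatrix M UNIV \<Omega>) *\<^sub>v
            (M *\<^sub>v (mat_inv (submatrix PXgY UNIV {..<nx}) *\<^sub>v J @\<^sub>v 0\<^sub>v (ny - nx)))) = 0)"
proof -
  define M\<^sub>\<Omega> where "M\<^sub>\<Omega> = submatrix M UNIV \<Omega>"
  define P\<^sub>1 where "P\<^sub>1 = submatrix PXgY UNIV {..<nx}"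
  have P: "PXgY \<in> carrier_mat nx ny" and M: "M \<in> carrier_mat nx ny"
    using PXgY_def M_def by simp_all
  have col_sums: "\<forall>j<ny. (\<Sum>i<nx. PXgY $$ (i, j)) = 1"
    using conditional_col_sums[OF PY_def PY_pos] PXgY_def by simp
  have "PXgY = (U * mat nx nx (\<lambda>(i, j). S $$ (i, j))) * M"
    using svd svd_factor_through_right_singular_vectors[OF U_carrier S_carrier V_carrier] S_diag
      alph M_def by simp
  then have reduce: "ones_vec nx \<bullet> (mat_inv M\<^sub>\<Omega> *\<^sub>v (M *\<^sub>v x)) = ones_vec nx \<bullet> (PXgY *\<^sub>v x)"
    if "x \<in> carrier_vec ny" for x
    using ones_mat_inv_col_submatrix[OF _ _ M Omega_sub Omega_card MOmega_inv col_sums that]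
      U_carrier M\<^sub>\<Omega>_def by simp
  have "ones_vec nx \<bullet> (mat_inv M\<^sub>\<Omega> *\<^sub>v (M *\<^sub>v PY)) = 1"
    using reduce ones_vec_scalar_mult_mat_vec[OF P col_sums] ones_vec_scalar_marginal[OF PY_def PXY_sum]
      PY_def by simp
  moreover have "ones_vec nx \<bullet> (mat_inv M\<^sub>\<Omega> *\<^sub>v (M *\<^sub>v (mat_inv P\<^sub>1 *\<^sub>v J @\<^sub>v 0\<^sub>v (ny - nx)))) = 0"
    if J: "J \<in> carrier_vec nx" and J_sum: "(\<Sum>i<nx. J $ i) = 0" for J
  proof -
    have P\<^sub>1: "P\<^sub>1 \<in> carrier_mat nx nx"
      using submatrix_cols_carrier[OF P, of "{..<nx}"] alph P\<^sub>1_def by simp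
    have "mat_inv P\<^sub>1 *\<^sub>v J \<in> carrier_vec nx"
      using mult_mat_vec_carrier[OF mat_inv_carrier[OF P1_inv[folded P\<^sub>1_def] P\<^sub>1] J] .
    then have "mat_inv P\<^sub>1 *\<^sub>v J @\<^sub>v 0\<^sub>v (ny - nx) \<in> carrier_vec ny"
      using append_carrier_vec[OF _ zero_carrier_vec[of "ny - nx"]] alph by fastforce
    then show ?thesis
      using reduce mult_mat_vec_leading_block_inv[OF P _ P1_inv J] alph J J_sum
      unfolding P\<^sub>1_def by (simp add: ones_vec_scalar_prod)
  qed
  ultimately show ?thesis unfolding M\<^sub>\<Omega>_def P\<^sub>1_def by blast
qed

end
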